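(* The algebra $\mathcal{A}_{+++}$ is the unital algebra generated by $\tilde k,\tilde l,\tilde p,\tilde q,r,\tilde m,\tilde n,\tilde s,\tilde t$ subject exactly to the $40$ relations $xy=yx=0$ for all $x\in X_1=\{\tilde k,\tilde l,\tilde p,\tilde q,r\}$ and $y\in X_2=\{\tilde m,\tilde n,\tilde s,\tilde t\}$. Consequently, there are no relations among the generators in $X_1$ nor among those in $X_2$, and $\mathcal{A}_{+++}$ is isomorphic to the fibre product $\{(f,g)\in \mathbb{C}\langle X_1\rangle\times\mathbb{C}\langle X_2\rangle : f(0)=g(0)\}$, where $\mathbb{C}\langle X_i\rangle$ is the free unital algebra on $X_i$ and $f(0)$ denotes the constant term.
   Context: Work over $\mathbb{C}$. For $\epsilon_a,\epsilon_b,\epsilon_c\in\{\pm1\}$ let $a_+=b_+=c_+=\tfrac12$, $a_-=\tfrac{\epsilon_a}{2}$, $b_-=\tfrac{\epsilon_b}{2}$, $c_-=\tfrac{\epsilon_c}{2}$. In the ordered basis $e_1\otimes e_1,e_1\otimes e_2,e_1\otimes e_3,e_2\otimes e_1,\dots,e_3\otimes e_3$ of $\mathbb{C}^3\otimes\mathbb{C}^3$ let $$\widehat R=\begin{pmatrix} a_+&0&0&0&0&0&0&0&a_-\\ 0&b_+&0&0&0&0&0&b_-&0\\ 0&0&a_+&0&0&0&a_-&0&0\\ 0&0&0&c_+&0&c_-&0&0&0\\ 0&0&0&0&1&0&0&0&0\\ 0&0&0&c_-&0&c_+&0&0&0\\ 0&0&a_-&0&0&0&a_+&0&0\\ 0&b_-&0&0&0&0&0&b_+&0\\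 a_-&0&0&0&0&0&0&0&a_+\end{pmatrix},$$ and $R=P\widehat R$ with $P$ the flip $e_i\otimes e_j\mapsto e_j\otimes e_i$. Let $T=\begin{pmatrix}k&p&l\\ q&r&s\\ m&t&n\end{pmatrix}$, $T_1=T\otimes I_3$, $T_2=I_3\otimes T$, and let $\mathcal{A}_{\epsilon_a\epsilon_b\epsilon_c}$ be the unital associative algebra generated by $k,l,m,n,p,q,r,s,t$ subject to $R\,T_1T_2=T_2T_1R$. $\mathcal{A}_{+++}$ denotes the case $\epsilon_a=\epsilon_b=\epsilon_c=+1$. New generators: $\tilde k=\tfrac12(k+n)$, $\tilde n=\tfrac12(k-n)$, $\tilde l=\tfrac12(l+m)$, $\tilde m=\tfrac12(l-m)$, $\tilde p=\tfrac12(p+t)$, $\tilde t=\tfrac12(p-t)$, $\tilde q=\tfrac12(q+s)$, $\tilde s=\tfrac12(q-s)$. *)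

theory Defs
  imports Complex_Main "HOL-Library.Poly_Mapping"
begin

text \<open>Words over an alphabet 'g form the free monoid (written additively, since
Poly_Mapping's convolution product uses a monoid_add structure on the exponents).\<close>

datatype 'g word = Word (letters: "'g list")

instantiation word :: (type) monoid_add
begin
definition zero_word :: "'g word" where "zero_word = Word []"
definition plus_word :: "'g word \<Rightarrow> 'g word \<Rightarrow> 'g word" where
  "plus_word u v = Word (letters u @ letters v)"
instance by standard (auto simp: zero_word_def plus_word_def)
end

text \<open>The free unital associative C-algebra C<g> : finitely supported
complex functions on words, with concatenation-convolution product.\<close>
type_synonym 'g ncpoly = "'g word \<Rightarrow>\<^sub>0 complex"

definition scal :: "complex \<Rightarrow> 'g ncpoly" where
  "scal c = Poly_Mapping.single 0 c"

definition var :: "'g \<Rightarrow> 'g ncpoly" where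
  "var g = Poly_Mapping.single (Word [g]) 1"

definition const_term :: "'g ncpoly \<Rightarrow> complex" where
  "const_term f = Poly_Mapping.lookup f 0"

definition subst :: "('g \<Rightarrow> 'h ncpoly) \<Rightarrow> 'g ncpoly \<Rightarrow> 'h ncpoly" where
  "subst \<sigma> f = (\<Sum>w\<in>Poly_Mapping.keys f. scal (Poly_Mapping.lookup f w) * prod_list (map \<sigma> (letters w)))"

text \<open>The subalgebra C<X> of C<g> generated by a subset X of letters
(elements supported on words all of whose letters lie in X).\<close>
definition free_on :: "'g set \<Rightarrow> 'g ncpoly set" where
  "free_on X = {f. \<forall>w\<in>Poly_Mapping.keys f. set (letters w) \<subseteq> X}"

text \<open>Two-sided ideal generated by a set (scalars are ring elements, so it is
automatically a C-subspace).\<close>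
inductive_set two_sided_ideal :: "'a::ring_1 set \<Rightarrow> 'a set" for S where
  zero: "0 \<in> two_sided_ideal S"
| gen: "s \<in> S \<Longrightarrow> a * s * b \<in> two_sided_ideal S"
| add: "x \<in> two_sided_ideal S \<Longrightarrow> y \<in> two_sided_ideal S \<Longrightarrow> x + y \<in> two_sided_ideal S"

datatype gen = Gk | Gl | Gm | Gn | Gp | Gq | Gr | Gs | Gt

text \<open>Indices 0..8 stand for e_i (x) e_j with n = 3 i + j (i,j in 0..2).\<close>

definition Tmat :: "nat \<Rightarrow> nat \<Rightarrow> gen ncpoly" where
  "Tmat i j = var ([[Gk, Gp, Gl], [Gq, Gr, Gs], [Gm, Gt, Gn]] ! i ! j)"

definition T1 :: "nat \<Rightarrow> nat \<Rightarrow> gen ncpoly" where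
  "T1 a b = (if a mod 3 = b mod 3 then Tmat (a div 3) (b div 3) else 0)"

definition T2 :: "nat \<Rightarrow> nat \<Rightarrow> gen ncpoly" where
  "T2 a b = (if a div 3 = b div 3 then Tmat (a mod 3) (b mod 3) else 0)"

definition Rhat :: "complex \<Rightarrow> complex \<Rightarrow> complex \<Rightarrow> nat \<Rightarrow> nat \<Rightarrow> complex" where
  "Rhat ea eb ec n m =
     (if n = m then [1/2, 1/2, 1/2, 1/2, 1, 1/2, 1/2, 1/2, 1/2] ! n
      else if n + m = 8 then [ea/2, eb/2, ea/2, ec/2, 0, ec/2, ea/2, eb/2, ea/2] ! n
      else 0)"

definition Pflip :: "nat \<Rightarrow> nat \<Rightarrow> complex" where
  "Pflip a b = (if a div 3 = b mod 3 \<and> a mod 3 = b div 3 then 1 else 0)"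

definition Rmat :: "complex \<Rightarrow> complex \<Rightarrow> complex \<Rightarrow> nat \<Rightarrow> nat \<Rightarrow> gen ncpoly" where
  "Rmat ea eb ec a b = scal (\<Sum>c<9. Pflip a c * Rhat ea eb ec c b)"

definition mmul :: "(nat \<Rightarrow> nat \<Rightarrow> 'a::semiring_0) \<Rightarrow> (nat \<Rightarrow> nat \<Rightarrow> 'a) \<Rightarrow> nat \<Rightarrow> nat \<Rightarrow> 'a" where
  "mmul A B a b = (\<Sum>c<9. A a c * B c b)"

text \<open>The 81 entries of R T1 T2 - T2 T1 R; A_{ea eb ec} = C<gen> / (these).\<close>
definition rtt_rels :: "complex \<Rightarrow> complex \<Rightarrow> complex \<Rightarrow> gen ncpoly set" where
  "rtt_rels ea eb ec =
     {mmul (mmul (Rmat ea eb ec) T1) T2 a b - mmul (mmul T2 T1) (Rmat ea eb ec) a b | a b. a < 9 \<and> b < 9}"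

definition kt :: "gen ncpoly" where "kt = scal (1/2) * (var Gk + var Gn)"
definition nt :: "gen ncpoly" where "nt = scal (1/2) * (var Gk - var Gn)"
definition lt :: "gen ncpoly" where "lt = scal (1/2) * (var Gl + var Gm)"
definition mt :: "gen ncpoly" where "mt = scal (1/2) * (var Gl - var Gm)"
definition pt :: "gen ncpoly" where "pt = scal (1/2) * (var Gp + var Gt)"
definition tt :: "gen ncpoly" where "tt = scal (1/2) * (var Gp - var Gt)"
definition qt :: "gen ncpoly" where "qt = scal (1/2) * (var Gq + var Gs)"
definition st :: "gen ncpoly" where "st = scal (1/2) * (var Gq - var Gs)"

definition X1 :: "gen ncpoly set" where "X1 = {kt, lt, pt, qt, var Gr}"
definition X2 :: "gen ncpoly set" where "X2 = {mt, nt, st, tt}"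

definition forty_rels :: "gen ncpoly set" where
  "forty_rels = {x * y | x y. x \<in> X1 \<and> y \<in> X2} \<union> {y * x | x y. x \<in> X1 \<and> y \<in> X2}"

text \<open>Abstract letters for the new generators; C<X1> and C<X2> are realised as the
subalgebras of C<tgen> on the letters of X1 resp. X2.\<close>
datatype tgen = Tk | Tl | Tp | Tq | Tr | Tm | Tn | Ts | Tt

definition TX1 :: "tgen set" where "TX1 = {Tk, Tl, Tp, Tq, Tr}"
definition TX2 :: "tgen set" where "TX2 = {Tm, Tn, Ts, Tt}"

definition fibre_product :: "(tgen ncpoly \<times> tgen ncpoly) set" where
  "fibre_product = {(f, g). f \<in> free_on TX1 \<and> g \<in> free_on TX2 \<and> const_term f = const_term g}"

text \<open>The natural maps C<gen> -> C<X1>, C<X2>: on new generators they send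
x in X1 to its letter (X2 to 0), resp. y in X2 to its letter (X1 to 0).
In terms of old generators, k = kt + nt, n = kt - nt, l = lt + mt, m = lt - mt,
p = pt + tt, t = pt - tt, q = qt + st, s = qt - st.\<close>
fun sigma1 :: "gen \<Rightarrow> tgen ncpoly" where
  "sigma1 Gk = var Tk" | "sigma1 Gn = var Tk"
| "sigma1 Gl = var Tl" | "sigma1 Gm = var Tl"
| "sigma1 Gp = var Tp" | "sigma1 Gt = var Tp"
| "sigma1 Gq = var Tq" | "sigma1 Gs = var Tq"
| "sigma1 Gr = var Tr"

fun sigma2 :: "gen \<Rightarrow> tgen ncpoly" where
  "sigma2 Gk = var Tn" | "sigma2 Gn = - var Tn"
| "sigma2 Gl = var Tm" | "sigma2 Gm = - var Tm"
| "sigma2 Gp = var Tt" | "sigma2 Gt = - var Tt"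
| "sigma2 Gq = var Ts" | "sigma2 Gs = - var Ts"
| "sigma2 Gr = 0"

end

theory Submission
  imports Defs
begin

(* (1) For eps = (1,1,1) the R-matrix is R = P (1 + J)/2, where J reverses both tensor
       factors.  Computing the 81 entries of R T1 T2 - T2 T1 R uniformly gives
       (1/2)(x y - x' y'), where ' is the involution T_ij -> T_(2-i)(2-j) on the
       generators, and every ordered pair (x, y) of generators occurs.
   (2) With the even parts (x + x')/2 (spanning X1) and odd parts (x - x')/2 (spanning
       X2), each product even*odd or odd*even is a combination of such relations, so
       the 40 relations lie in the RTT ideal; conversely every RTT relation is killed
       by sigma1 and sigma2.
   (3) After the linear change of variables tau : C<tgen> -> C<gen> (inverse rho),
       sigma1 and sigma2 become the projections of C<tgen> onto C<TX1> and C<TX2>.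
       An element killed by both is supported on words mixing TX1- and TX2-letters;
       such a word contains an adjacent mixed pair, i.e. one of the 40 relations.
       This closes the chain  RTT ideal <= kernel <= 40-ideal <= RTT ideal.
   (4) The same projections show that the image of (sigma1, sigma2) is the fibre
       product: given (f, g) with equal constant terms, f + g - f(0) is a preimage. *)

section \<open>The free algebra and its substitution homomorphisms\<close>

text \<open>Induction over finitely supported functions: they are finite sums of monomials.\<close>
lemma pm_induct[case_names zero single add]:
  assumes "P 0" "\<And>w c. P (Poly_Mapping.single w c)" "\<And>a b. P a \<Longrightarrow> P b \<Longrightarrow> P (a + b)"
  shows "P (f::'a \<Rightarrow>\<^sub>0 'b::comm_monoid_add)"
proof -
  have "P (\<Sum>w\<in>I. Poly_Mapping.single w (Poly_Mapping.lookup f w))" if "finite I" for I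
    using that by (induction I rule: finite_induct) (auto intro: assms)
  then have "P (\<Sum>w\<in>Poly_Mapping.keys f. Poly_Mapping.single w (Poly_Mapping.lookup f w))" by simp
  moreover have "f = (\<Sum>w\<in>Poly_Mapping.keys f. Poly_Mapping.single w (Poly_Mapping.lookup f w))"
    by (rule poly_mapping_eqI) (auto simp: lookup_sum lookup_single when_def in_keys_iff)
  ultimately show ?thesis by simp
qed

lemma scal_0[simp]: "scal 0 = 0" by (simp add: scal_def)
lemma scal_1[simp]: "scal 1 = 1" by (simp add: scal_def)
lemma scal_add: "scal (a + b) = scal a + scal b" by (simp add: scal_def single_add)
lemma scal_mult: "scal (a * b) = scal a * scal b" by (simp add: scal_def mult_single)

lemma scal_if: "scal (if P then c else 0) = (if P then scal c else 0)"
  by simp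

lemma scal_single: "scal c * Poly_Mapping.single w d = Poly_Mapping.single w (c * d)"
  by (simp add: scal_def mult_single)
lemma single_scal: "Poly_Mapping.single w d * scal c = Poly_Mapping.single w (d * c)"
  by (simp add: scal_def mult_single)

lemma scal_comm: "scal c * (f::'g ncpoly) = f * scal c"
  by (induction f rule: pm_induct) (auto simp: scal_single single_scal distrib_left distrib_right mult.commute)

lemma mult_scal_right: "x * (scal c * y) = scal c * (x * (y::'g ncpoly))"
proof -
  have "x * (scal c * y) = (x * scal c) * y" by (simp only: mult.assoc)
  also have "x * scal c = scal c * x" by (rule scal_comm[symmetric])
  finally show ?thesis by (simp only: mult.assoc)
qed

lemma scal_scal: "scal c * (scal d * x) = scal (c * d) * (x::'g ncpoly)"
  by (simp only: mult.assoc[symmetric] scal_mult)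

lemma scal_mult_scal: "(scal c * x) * (scal d * y) = scal (c * d) * (x * (y::'g ncpoly))"
proof -
  have "(scal c * x) * (scal d * y) = scal c * (scal d * (x * y))"
    by (simp only: mult.assoc mult_scal_right[of x])
  then show ?thesis by (simp only: scal_scal)
qed

lemma scal_half_double: "scal (1/2) * (x + x) = (x :: 'g ncpoly)"
proof -
  have "scal (1/2) * (x + x) = (scal (1/2) + scal (1/2)) * x"
    by (simp only: distrib_left distrib_right)
  also have "scal (1/2) + scal (1/2) = (1 :: 'g ncpoly)"
    by (simp flip: scal_add)
  finally show ?thesis by simp
qed

lemma lookup_scal_mult: "Poly_Mapping.lookup (scal c * (f::'g ncpoly)) w = c * Poly_Mapping.lookup f w"
  by (induction f rule: pm_induct) (auto simp: scal_single lookup_single when_def distrib_left lookup_add)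

definition mon :: "('g \<Rightarrow> 'h ncpoly) \<Rightarrow> 'g word \<Rightarrow> 'h ncpoly" where
  "mon \<sigma> w = prod_list (map \<sigma> (letters w))"

lemma mon_add: "mon \<sigma> (u + v) = mon \<sigma> u * mon \<sigma> v"
  by (simp add: mon_def plus_word_def)

text \<open>subst may be computed over any finite superset of the support; this gives additivity.\<close>
lemma subst_superset:
  assumes "finite S" "Poly_Mapping.keys f \<subseteq> S"
  shows "subst \<sigma> f = (\<Sum>w\<in>S. scal (Poly_Mapping.lookup f w) * mon \<sigma> w)"
  unfolding subst_def mon_def
  by (rule sum.mono_neutral_left) (use assms in \<open>auto simp: in_keys_iff\<close>)

lemma subst_0[simp]: "subst \<sigma> 0 = 0" by (simp add: subst_def)

lemma subst_single: "subst \<sigma> (Poly_Mapping.single w c) = scal c * mon \<sigma> w"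
  by (simp add: subst_def mon_def)

lemma subst_add: "subst \<sigma> (f + g) = subst \<sigma> f + subst \<sigma> g"
proof -
  let ?S = "Poly_Mapping.keys f \<union> Poly_Mapping.keys g"
  have "subst \<sigma> (f + g) = (\<Sum>w\<in>?S. scal (Poly_Mapping.lookup (f+g) w) * mon \<sigma> w)"
    by (rule subst_superset) (auto dest: subsetD[OF keys_add])
  also have "\<dots> = (\<Sum>w\<in>?S. scal (Poly_Mapping.lookup f w) * mon \<sigma> w) + (\<Sum>w\<in>?S. scal (Poly_Mapping.lookup g w) * mon \<sigma> w)"
    by (simp add: lookup_add scal_add distrib_right sum.distrib)
  also have "\<dots> = subst \<sigma> f + subst \<sigma> g"
    by (simp add: subst_superset[symmetric])
  finally show ?thesis .
qed

lemma subst_uminus: "subst \<sigma> (- f) = - subst \<sigma> f"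
  by (metis add_eq_0_iff2 subst_0 subst_add add.right_inverse)
lemma subst_diff: "subst \<sigma> (f - g) = subst \<sigma> f - subst \<sigma> g"
  by (metis diff_conv_add_uminus subst_add subst_uminus)

lemma subst_mult: "subst \<sigma> (f * g) = subst \<sigma> f * subst \<sigma> g"
proof (induction f rule: pm_induct)
  case (single u a)
  have "subst \<sigma> (Poly_Mapping.single u a * Poly_Mapping.single v b)
      = subst \<sigma> (Poly_Mapping.single u a) * subst \<sigma> (Poly_Mapping.single v b)" for v b
    by (simp add: mult_single subst_single mon_add scal_mult mult.assoc) (metis mult.assoc scal_comm)
  then show ?case
    by (induction g rule: pm_induct) (auto simp: subst_add distrib_left)
qed (auto simp: subst_add distrib_right)

lemma subst_scal[simp]: "subst \<sigma> (scal c) = scal c"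
  by (simp add: scal_def subst_single mon_def zero_word_def)
lemma subst_var[simp]: "subst \<sigma> (var g) = \<sigma> g"
  by (simp add: var_def subst_single mon_def)

lemma subst_one[simp]: "subst \<sigma> 1 = 1"
  using subst_scal[of \<sigma> 1] by simp

lemma subst_prod_list: "subst \<sigma> (prod_list xs) = prod_list (map (subst \<sigma>) xs)"
  by (induction xs) (auto simp: subst_mult)

lemma single_empty_word[simp]: "Poly_Mapping.single (Word []) (1::complex) = 1"
  by (metis single_one zero_word_def)

lemma subst_var_id[simp]: "subst var f = f"
proof -
  have "prod_list (map var xs) = Poly_Mapping.single (Word xs) 1" for xs :: "'g list"
    by (induction xs) (auto simp: var_def mult_single plus_word_def)
  then have mon_var: "mon var w = Poly_Mapping.single w 1" for w :: "'g word"
    by (cases w) (simp add: mon_def)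
  show ?thesis
    by (induction f rule: pm_induct) (auto simp: subst_add subst_single scal_single mon_var)
qed

lemma subst_comp: "subst \<tau> (subst \<rho> f) = subst (\<lambda>g. subst \<tau> (\<rho> g)) f"
  by (induction f rule: pm_induct)
     (auto simp: subst_add subst_single subst_mult mon_def subst_prod_list o_def)

definition prj :: "'g set \<Rightarrow> 'g \<Rightarrow> 'g ncpoly" where
  "prj A t = (if t \<in> A then var t else 0)"

lemma lookup_subst_prj: "Poly_Mapping.lookup (subst (prj A) F) w0 =
   (if set (letters w0) \<subseteq> A then Poly_Mapping.lookup F w0 else 0)"
proof -
  have "prod_list (map (prj A) xs) = (if set xs \<subseteq> A then Poly_Mapping.single (Word xs) 1 else 0)" for xs
    by (induction xs) (auto simp: prj_def var_def mult_single plus_word_def)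
  then have mon_prj: "mon (prj A) w = (if set (letters w) \<subseteq> A then Poly_Mapping.single w 1 else 0)" for w
    by (cases w) (simp add: mon_def)
  have "Poly_Mapping.lookup (subst (prj A) F) w0 =
     (\<Sum>w\<in>Poly_Mapping.keys F. Poly_Mapping.lookup F w * Poly_Mapping.lookup (mon (prj A) w) w0)"
    unfolding subst_def mon_def[symmetric] by (simp add: lookup_sum lookup_scal_mult)
  also have "\<dots> = (\<Sum>w\<in>Poly_Mapping.keys F. if w = w0 then
       (if set (letters w0) \<subseteq> A then Poly_Mapping.lookup F w0 else 0) else 0)"
    by (rule sum.cong) (auto simp: mon_prj lookup_single when_def)
  also have "\<dots> = (if set (letters w0) \<subseteq> A then Poly_Mapping.lookup F w0 else 0)"
    by (simp add: sum.delta in_keys_iff)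
  finally show ?thesis .
qed

lemma subst_prj_free_on: "subst (prj A) F \<in> free_on A"
  unfolding free_on_def using lookup_subst_prj[of A F] by (auto simp: in_keys_iff split: if_splits)

lemma const_term_subst_prj: "const_term (subst (prj A) F) = const_term F"
  unfolding const_term_def by (simp add: lookup_subst_prj zero_word_def)

text \<open>Recovering one factor of a fibre-product element from f + g - f(0), when f and g
  live on disjoint alphabets.\<close>
lemma subst_prj_fibre:
  assumes f: "f \<in> free_on A" and g: "g \<in> free_on B" and AB: "A \<inter> B = {}"
    and c: "const_term f = const_term g"
  shows "subst (prj A) (f + g - scal (const_term f)) = f"
proof (rule poly_mapping_eqI)
  fix w
  show "Poly_Mapping.lookup (subst (prj A) (f + g - scal (const_term f))) w = Poly_Mapping.lookup f w"
  proof (cases "set (letters w) \<subseteq> A")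
    case True
    show ?thesis
    proof (cases "w = 0")
      case True
      then show ?thesis using c \<open>set (letters w) \<subseteq> A\<close>
        by (simp add: lookup_subst_prj lookup_add lookup_minus scal_def const_term_def)
    next
      case False
      then have "letters w \<noteq> []" by (cases w) (auto simp: zero_word_def)
      then have "\<not> set (letters w) \<subseteq> B" using True AB by (cases "letters w") auto
      then have "Poly_Mapping.lookup g w = 0" using g by (auto simp: free_on_def in_keys_iff)
      then show ?thesis using True False
        by (simp add: lookup_subst_prj lookup_add lookup_minus scal_def lookup_single when_def)
    qed
  next
    case False
    then have "Poly_Mapping.lookup f w = 0" using f by (auto simp: free_on_def in_keys_iff)
    then show ?thesis using False by (simp add: lookup_subst_prj)
  qed
qed

lemma ideal_gen: "s \<in> S \<Longrightarrow> s \<in> two_sided_ideal S"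
  using two_sided_ideal.gen[of s S 1 1] by simp

lemma ideal_left: "x \<in> two_sided_ideal S \<Longrightarrow> a * x \<in> two_sided_ideal S"
proof (induction rule: two_sided_ideal.induct)
  case (gen s b c)
  have "a * (b * s * c) = (a * b) * s * c" by (simp add: mult.assoc)
  then show ?case using two_sided_ideal.gen[OF gen] by simp
qed (auto simp: distrib_left intro: two_sided_ideal.intros)

lemma ideal_right: "x \<in> two_sided_ideal S \<Longrightarrow> x * a \<in> two_sided_ideal S"
proof (induction rule: two_sided_ideal.induct)
  case (gen s b c)
  have "(b * s * c) * a = b * s * (c * a)" by (simp add: mult.assoc)
  then show ?case using two_sided_ideal.gen[OF gen] by simp
qed (auto simp: distrib_right intro: two_sided_ideal.intros)

lemma ideal_diff: "x \<in> two_sided_ideal S \<Longrightarrow> y \<in> two_sided_ideal S \<Longrightarrow> x - y \<in> two_sided_ideal S"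
  using two_sided_ideal.add[of x S "- y"] ideal_left[of y S "- 1"] by simp

lemma ideal_sum: "(\<And>i. i \<in> I \<Longrightarrow> f i \<in> two_sided_ideal S) \<Longrightarrow> sum f I \<in> two_sided_ideal S"
  by (induction I rule: infinite_finite_induct) (auto intro: two_sided_ideal.intros)

lemma ideal_mono: "S \<subseteq> two_sided_ideal T \<Longrightarrow> two_sided_ideal S \<subseteq> two_sided_ideal T"
proof
  fix x assume ST: "S \<subseteq> two_sided_ideal T" and "x \<in> two_sided_ideal S"
  then show "x \<in> two_sided_ideal T"
    by (induction rule: two_sided_ideal.induct[OF \<open>x \<in> _\<close>])
       (auto intro: ideal_left ideal_right two_sided_ideal.intros)
qed

lemma ideal_in_kernel:
  assumes "\<And>s. s \<in> S \<Longrightarrow> subst \<sigma> s = 0" "x \<in> two_sided_ideal S"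
  shows "subst \<sigma> x = 0"
  using assms(2) by (induction rule: two_sided_ideal.induct) (auto simp: assms(1) subst_mult subst_add)

section \<open>The RTT relations for eps = (1,1,1)\<close>

definition entry :: "nat \<Rightarrow> nat \<Rightarrow> gen" where
  "entry i j = [[Gk, Gp, Gl], [Gq, Gr, Gs], [Gm, Gt, Gn]] ! i ! j"

fun ginv :: "gen \<Rightarrow> gen" where
  "ginv Gk = Gn" | "ginv Gn = Gk" | "ginv Gl = Gm" | "ginv Gm = Gl" | "ginv Gp = Gt" | "ginv Gt = Gp"
| "ginv Gq = Gs" | "ginv Gs = Gq" | "ginv Gr = Gr"

lemma ginv_ginv[simp]: "ginv (ginv g) = g"
  by (cases g) auto

lemma entry_surj: "\<exists>i<3. \<exists>j<3. entry i j = g"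
  by (cases g) (simp_all add: entry_def numeral_3_eq_3 Ex_less_Suc)

lemma less_3_cases: "i < 3 \<Longrightarrow> i = 0 \<or> i = 1 \<or> i = (2::nat)"
  by auto

lemma ginv_entry: "i < 3 \<Longrightarrow> j < 3 \<Longrightarrow> ginv (entry i j) = entry (2 - i) (2 - j)"
  by (drule less_3_cases, drule less_3_cases) (auto simp: entry_def)

lemma Tmat_entry: "Tmat i j = var (entry i j)"
  by (simp add: Tmat_def entry_def)

text \<open>Every entry of R T1 T2 - T2 T1 R will turn out to be one of these relations.\<close>
definition flip_rel :: "gen \<Rightarrow> gen \<Rightarrow> gen ncpoly" where
  "flip_rel g h = scal (1/2) * (var g * var h - var (ginv g) * var (ginv h))"

text \<open>Index arithmetic: a = 3 i + j encodes e_i (x) e_j; swp is the flip P on indices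
  and 8 - a reverses both tensor factors.\<close>
definition swp :: "nat \<Rightarrow> nat" where
  "swp a = 3 * (a mod 3) + a div 3"

lemma less_9_cases: "a < (9::nat) \<Longrightarrow> a \<in> {0, 1, 2, 3, 4, 5, 6, 7, 8}"
  by auto

lemma index_lt_9: "a < 9 \<Longrightarrow> 3 * (a div 3) + b mod 3 < (9::nat)"
  using less_9_cases[of a] by auto

lemma swp_div_mod:
  assumes "a < 9"
  shows "swp a < 9" "swp a div 3 = a mod 3" "swp a mod 3 = a div 3"
    "(8 - swp a) div 3 = 2 - a mod 3" "(8 - swp a) mod 3 = 2 - a div 3" "8 - swp a < 9"
  using less_9_cases[OF assms] unfolding swp_def by auto

lemma swp_eq_iff:
  assumes "a < 9" "b < 9"
  shows "(b = swp a) = (a = swp b)" "(b = 8 - swp a) = (a = 8 - swp b)"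
proof -
  have swp_swp: "swp (swp x) = x" and swp_rev: "swp (8 - x) = 8 - swp x" if "x < 9" for x
    using less_9_cases[OF that] unfolding swp_def by auto
  show "(b = swp a) = (a = swp b)"
    using assms swp_swp by auto
  show "(b = 8 - swp a) = (a = 8 - swp b)"
    using assms swp_swp swp_rev swp_div_mod(1) by (metis diff_diff_cancel less_Suc_eq_le numeral_nat(3))
qed

lemma mmul_assoc: "mmul (mmul A B) C = mmul A (mmul B C)"
  unfolding mmul_def fun_eq_iff sum_distrib_left sum_distrib_right mult.assoc
  by (auto intro: sum.swap)

lemma mmul_T1_T2:
  assumes "b < 9"
  shows "mmul T1 T2 a b = Tmat (a div 3) (b div 3) * Tmat (a mod 3) (b mod 3)"
proof -
  let ?c = "3 * (b div 3) + a mod 3"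
  have "mmul T1 T2 a b = (\<Sum>c<9. if c = ?c then Tmat (a div 3) (c div 3) * Tmat (c mod 3) (b mod 3) else 0)"
    unfolding mmul_def T1_def T2_def by (rule sum.cong) (auto, metis mult_div_mod_eq)
  also have "\<dots> = Tmat (a div 3) (b div 3) * Tmat (a mod 3) (b mod 3)"
    using assms by (simp add: index_lt_9)
  finally show ?thesis .
qed

lemma mmul_T2_T1:
  assumes "a < 9"
  shows "mmul T2 T1 a b = Tmat (a mod 3) (b mod 3) * Tmat (a div 3) (b div 3)"
proof -
  let ?c = "3 * (a div 3) + b mod 3"
  have "mmul T2 T1 a b = (\<Sum>c<9. if c = ?c then Tmat (a mod 3) (c mod 3) * Tmat (c div 3) (b div 3) else 0)"
    unfolding mmul_def T1_def T2_def by (rule sum.cong) (auto, metis mult_div_mod_eq)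
  also have "\<dots> = Tmat (a mod 3) (b mod 3) * Tmat (a div 3) (b div 3)"
    using assms by (simp add: index_lt_9)
  finally show ?thesis .
qed

text \<open>For eps = (1,1,1), R = P (1 + J)/2, with J the reversal a -> 8 - a.\<close>
lemma Rhat_111: "n < 9 \<Longrightarrow> Rhat 1 1 1 n m = (if m = n then 1/2 else 0) + (if m = 8 - n then 1/2 else 0)"
  using less_9_cases[of n] by (auto simp: Rhat_def)

lemma Pflip_swp: "a < 9 \<Longrightarrow> Pflip a c = (if c = swp a then 1 else 0)"
  unfolding Pflip_def by (auto simp: swp_div_mod) (metis mult_div_mod_eq swp_def add.commute)

lemma Rmat_111: "a < 9 \<Longrightarrow>
    Rmat 1 1 1 a b = scal ((if b = swp a then 1/2 else 0) + (if b = 8 - swp a then 1/2 else 0))"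
  by (simp add: Rmat_def Pflip_swp Rhat_111 swp_div_mod if_distrib[of "\<lambda>x. x * _"] sum.delta
      cong: if_cong)

lemma mmul_Rmat_left:
  assumes "a < 9"
  shows "mmul (Rmat 1 1 1) M a b = scal (1/2) * (M (swp a) b + M (8 - swp a) b)"
  using assms unfolding mmul_def
  by (simp add: Rmat_111 scal_add scal_if distrib_right distrib_left sum.distrib swp_div_mod
      if_distrib[of "\<lambda>x. x * _"] sum.delta cong: if_cong)

lemma mmul_Rmat_right:
  assumes "b < 9"
  shows "mmul M (Rmat 1 1 1) a b = scal (1/2) * (M a (swp b) + M a (8 - swp b))"
proof -
  have "Rmat 1 1 1 c b = scal ((if c = swp b then 1/2 else 0) + (if c = 8 - swp b then 1/2 else 0))"
    if "c < 9" for c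
    using that assms by (simp add: Rmat_111 swp_eq_iff)
  then have "mmul M (Rmat 1 1 1) a b
      = (\<Sum>c<9. M a c * scal ((if c = swp b then 1/2 else 0) + (if c = 8 - swp b then 1/2 else 0)))"
    unfolding mmul_def by simp
  also have "\<dots> = (M a (swp b) + M a (8 - swp b)) * scal (1/2)"
    using assms
    by (simp add: scal_add scal_if distrib_right distrib_left sum.distrib swp_div_mod
      if_distrib[of "\<lambda>x. _ * x"] sum.delta cong: if_cong)
  finally show ?thesis by (simp add: scal_comm)
qed

text \<open>The (a, b) entry of R T1 T2 - T2 T1 R, a = 3 a1 + a2, b = 3 b1 + b2: the terms coming
  from P cancel and the terms coming from P J leave
  (1/2)(T_(2-a2) b1 T_(2-a1) b2 - T_a2 (2-b1) T_a1 (2-b2)).\<close>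
lemma rtt_entry:
  assumes "a < 9" "b < 9"
  shows "mmul (mmul (Rmat 1 1 1) T1) T2 a b - mmul (mmul T2 T1) (Rmat 1 1 1) a b
       = flip_rel (entry (2 - a mod 3) (b div 3)) (entry (2 - a div 3) (b mod 3))"
proof -
  let ?T = "\<lambda>i j. var (entry i j)"
  have lt3: "a mod 3 < 3" "a div 3 < 3" "b mod 3 < 3" "b div 3 < 3"
    using assms by auto
  have "mmul (mmul (Rmat 1 1 1) T1) T2 a b = scal (1/2) *
      (?T (a mod 3) (b div 3) * ?T (a div 3) (b mod 3)
       + ?T (2 - a mod 3) (b div 3) * ?T (2 - a div 3) (b mod 3))"
    using assms by (simp add: mmul_assoc mmul_Rmat_left mmul_T1_T2 swp_div_mod Tmat_entry)
  moreover have "mmul (mmul T2 T1) (Rmat 1 1 1) a b = scal (1/2) *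
      (?T (a mod 3) (b div 3) * ?T (a div 3) (b mod 3)
       + ?T (a mod 3) (2 - b div 3) * ?T (a div 3) (2 - b mod 3))"
    using assms by (simp add: mmul_Rmat_right mmul_T2_T1 swp_div_mod Tmat_entry)
  ultimately show ?thesis
    using lt3 by (simp add: flip_rel_def ginv_entry right_diff_distrib distrib_left)
qed

lemma flip_rel_in_rtt_rels: "flip_rel g h \<in> rtt_rels 1 1 1"
proof -
  obtain i j where ij: "i < 3" "j < 3" "g = entry i j" using entry_surj by metis
  obtain i' j' where ij': "i' < 3" "j' < 3" "h = entry i' j'" using entry_surj by metis
  define a where "a = 3 * (2 - i') + (2 - i)"
  define b where "b = 3 * j + j'"
  have ab: "a < 9" "b < 9"
    using ij ij' by (simp_all add: a_def b_def)
  have div_mod: "(3 * x + y) div 3 = x" "(3 * x + y) mod 3 = y" if "y < 3" for x y :: nat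
    using that by simp_all
  have "a mod 3 = 2 - i" "a div 3 = 2 - i'" "b div 3 = j" "b mod 3 = j'"
    unfolding a_def b_def using div_mod[of "2 - i'" "2 - i"] div_mod[of j j'] ij'(2) by simp_all
  then have "flip_rel g h = mmul (mmul (Rmat 1 1 1) T1) T2 a b - mmul (mmul T2 T1) (Rmat 1 1 1) a b"
    using rtt_entry[OF ab] ij ij' by simp
  then show ?thesis
    unfolding rtt_rels_def using ab by blast
qed

lemma rtt_rels_eq: "rtt_rels 1 1 1 = {flip_rel g h | g h. True}"
proof
  show "rtt_rels 1 1 1 \<subseteq> {flip_rel g h | g h. True}"
  proof
    fix x assume "x \<in> rtt_rels 1 1 1"
    then obtain a b where "a < 9" "b < 9"
      and "x = mmul (mmul (Rmat 1 1 1) T1) T2 a b - mmul (mmul T2 T1) (Rmat 1 1 1) a b"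
      unfolding rtt_rels_def by blast
    then show "x \<in> {flip_rel g h | g h. True}"
      by (auto simp: rtt_entry)
  qed
  show "{flip_rel g h | g h. True} \<subseteq> rtt_rels 1 1 1"
    using flip_rel_in_rtt_rels by blast
qed

section \<open>The forty relations generate the RTT ideal\<close>

definition even_part :: "gen \<Rightarrow> gen ncpoly" where
  "even_part g = scal (1/2) * (var g + var (ginv g))"

definition odd_part :: "gen \<Rightarrow> gen ncpoly" where
  "odd_part g = scal (1/2) * (var g - var (ginv g))"

lemma X1_even: "X1 = even_part ` {Gk, Gl, Gp, Gq, Gr}"
proof -
  have "var Gr = even_part Gr" by (simp add: even_part_def scal_half_double)
  then show ?thesis
    by (simp add: X1_def kt_def lt_def pt_def qt_def even_part_def)
qed

lemma X2_odd: "X2 = odd_part ` {Gl, Gk, Gq, Gp}"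
  by (simp add: X2_def mt_def nt_def st_def tt_def odd_part_def)

lemma even_odd: "even_part g * odd_part h = scal (1/2) * (flip_rel g h - flip_rel g (ginv h))"
proof -
  have "(var g + var (ginv g)) * (var h - var (ginv h))
      = (var g * var h - var (ginv g) * var (ginv h)) - (var g * var (ginv h) - var (ginv g) * var h)"
    by (simp add: algebra_simps)
  then show ?thesis
    unfolding even_part_def odd_part_def flip_rel_def scal_mult_scal
    by (simp add: right_diff_distrib scal_scal)
qed

lemma odd_even: "odd_part h * even_part g = scal (1/2) * (flip_rel h g + flip_rel h (ginv g))"
proof -
  have "(var h - var (ginv h)) * (var g + var (ginv g))
      = (var h * var g - var (ginv h) * var (ginv g)) + (var h * var (ginv g) - var (ginv h) * var g)"
    by (simp add: algebra_simps)
  then show ?thesis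
    unfolding even_part_def odd_part_def flip_rel_def scal_mult_scal
    by (simp add: distrib_left scal_scal)
qed

lemma forty_rels_in_rtt_ideal: "forty_rels \<subseteq> two_sided_ideal (rtt_rels 1 1 1)"
proof -
  have flip: "flip_rel g h \<in> two_sided_ideal (rtt_rels 1 1 1)" for g h
    by (rule ideal_gen) (auto simp: rtt_rels_eq)
  have "even_part g * odd_part h \<in> two_sided_ideal (rtt_rels 1 1 1)" for g h
    unfolding even_odd by (intro ideal_left ideal_diff flip)
  moreover have "odd_part h * even_part g \<in> two_sided_ideal (rtt_rels 1 1 1)" for g h
    unfolding odd_even by (intro ideal_left two_sided_ideal.add flip)
  ultimately show ?thesis
    unfolding forty_rels_def X1_even X2_odd by auto
qed

text \<open>sigma1 identifies x with x', sigma2 identifies x with -x'; so both kill x y - x' y'.\<close>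
lemma rtt_ideal_in_kernel:
  "two_sided_ideal (rtt_rels 1 1 1) \<subseteq> {f. subst sigma1 f = 0 \<and> subst sigma2 f = 0}"
proof -
  have "sigma1 (ginv g) = sigma1 g" "sigma2 (ginv g) = - sigma2 g" for g
    by (cases g; simp)+
  then have kills: "subst sigma1 s = 0" "subst sigma2 s = 0" if "s \<in> rtt_rels 1 1 1" for s
    using that by (auto simp: rtt_rels_eq flip_rel_def subst_diff subst_mult)
  show ?thesis
    using ideal_in_kernel[of "rtt_rels 1 1 1" sigma1, OF kills(1)]
      ideal_in_kernel[of "rtt_rels 1 1 1" sigma2, OF kills(2)] by blast
qed

section \<open>Change of variables to the new generators\<close>

text \<open>tau sends the abstract letters to the new generators; rho = sigma1 + sigma2 is its
  inverse, and through tau the maps sigma1, sigma2 become the projections onto TX1, TX2.\<close>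
fun tau :: "tgen \<Rightarrow> gen ncpoly" where
  "tau Tk = kt" | "tau Tl = lt" | "tau Tp = pt" | "tau Tq = qt" | "tau Tr = var Gr"
| "tau Tm = mt" | "tau Tn = nt" | "tau Ts = st" | "tau Tt = tt"

definition rho :: "gen \<Rightarrow> tgen ncpoly" where
  "rho g = sigma1 g + sigma2 g"

lemma tau_rho: "(\<lambda>g. subst tau (rho g)) = var"
proof
  have half_sum: "scal (1/2) * (x + y) + scal (1/2) * (x - y) = (x :: 'g ncpoly)"
    and half_diff: "scal (1/2) * (x + y) - scal (1/2) * (x - y) = (y :: 'g ncpoly)" for x y
  proof -
    have "(x + y) + (x - y) = x + x" "(x + y) - (x - y) = y + y"
      by simp_all
    then show "scal (1/2) * (x + y) + scal (1/2) * (x - y) = x"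
      and "scal (1/2) * (x + y) - scal (1/2) * (x - y) = y"
      by (simp_all only: distrib_left[symmetric] right_diff_distrib[symmetric] scal_half_double)
  qed
  fix g show "subst tau (rho g) = var g"
    by (cases g) (simp_all add: rho_def subst_add subst_uminus kt_def nt_def lt_def mt_def
        pt_def tt_def qt_def st_def half_sum half_diff subst_diff)
qed

lemma prj_rho: "(\<lambda>g. subst (prj TX1) (rho g)) = sigma1" "(\<lambda>g. subst (prj TX2) (rho g)) = sigma2"
  by (rule ext, case_tac g, simp_all add: rho_def prj_def TX1_def TX2_def subst_add subst_uminus subst_diff)+

lemma sigma_tau: "(\<lambda>t. subst sigma1 (tau t)) = prj TX1" "(\<lambda>t. subst sigma2 (tau t)) = prj TX2"
  by (rule ext, case_tac t, simp_all add: prj_def TX1_def TX2_def subst_add subst_diff subst_mult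
        kt_def nt_def lt_def mt_def pt_def tt_def qt_def st_def scal_half_double)+

section \<open>The kernel of (sigma1, sigma2) lies in the ideal of the forty relations\<close>

lemma adjacent_change:
  "(\<exists>a\<in>set xs. P a) \<Longrightarrow> (\<exists>b\<in>set xs. \<not> P b) \<Longrightarrow> \<exists>us a b vs. xs = us @ a # b # vs \<and> P a \<noteq> P b"
proof (induction xs)
  case (Cons x ys)
  show ?case
  proof (cases ys)
    case Nil
    with Cons.prems show ?thesis by auto
  next
    case (Cons y zs)
    show ?thesis
    proof (cases "P x = P y")
      case True
      then have "\<exists>a\<in>set ys. P a" "\<exists>b\<in>set ys. \<not> P b"
        using Cons.prems Cons by auto
      then obtain us a b vs where "ys = us @ a # b # vs" "P a \<noteq> P b"
        using Cons.IH by blast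
      then show ?thesis by (metis append_Cons)
    next
      case False
      then show ?thesis using Cons by (metis append.left_neutral)
    qed
  qed
qed simp

text \<open>A word in the new generators using letters of both TX1 and TX2 lies in the ideal of
  the forty relations, since it contains a factor x y or y x with x in X1, y in X2.\<close>
lemma mixed_word_in_ideal:
  assumes "\<not> set xs \<subseteq> TX1" "\<not> set xs \<subseteq> TX2"
  shows "prod_list (map tau xs) \<in> two_sided_ideal forty_rels"
proof -
  have "t \<in> TX1 \<or> t \<in> TX2" for t
    by (cases t) (auto simp: TX1_def TX2_def)
  then have "\<exists>a\<in>set xs. a \<in> TX1" "\<exists>b\<in>set xs. b \<notin> TX1"
    using assms by blast+
  then obtain us a b vs where xs: "xs = us @ a # b # vs" and ab: "(a \<in> TX1) \<noteq> (b \<in> TX1)"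
    using adjacent_change[of xs "\<lambda>t. t \<in> TX1"] by blast
  have "tau t \<in> X1" if "t \<in> TX1" for t using that by (auto simp: TX1_def X1_def)
  moreover have "tau t \<in> X2" if "t \<notin> TX1" for t using that by (cases t) (auto simp: TX1_def X2_def)
  ultimately have "tau a * tau b \<in> forty_rels"
    using ab unfolding forty_rels_def by (cases "a \<in> TX1") blast+
  then have "prod_list (map tau us) * (tau a * tau b) * prod_list (map tau vs) \<in> two_sided_ideal forty_rels"
    by (rule two_sided_ideal.gen)
  then show ?thesis unfolding xs by (simp add: mult.assoc)
qed

lemma kernel_in_forty_ideal:
  "{f. subst sigma1 f = 0 \<and> subst sigma2 f = 0} \<subseteq> two_sided_ideal forty_rels"
proof clarify
  fix f assume s1: "subst sigma1 f = 0" and s2: "subst sigma2 f = 0"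
  define F where "F = subst rho f"
  have f_eq: "f = subst tau F" unfolding F_def subst_comp tau_rho by simp
  have "subst (prj TX1) F = 0" "subst (prj TX2) F = 0"
    unfolding F_def subst_comp prj_rho by (fact s1, fact s2)
  then have mixed: "\<not> set (letters w) \<subseteq> TX1 \<and> \<not> set (letters w) \<subseteq> TX2" if "w \<in> Poly_Mapping.keys F" for w
    using lookup_subst_prj[of TX1 F w] lookup_subst_prj[of TX2 F w] that by (auto simp: in_keys_iff)
  have "subst tau F \<in> two_sided_ideal forty_rels"
    unfolding subst_def
    by (rule ideal_sum, rule ideal_left, rule mixed_word_in_ideal) (use mixed in auto)
  then show "f \<in> two_sided_ideal forty_rels" using f_eq by simp
qed

section \<open>The image of (sigma1, sigma2) is the fibre product\<close>

lemma image_eq_fibre_product: "(\<lambda>f. (subst sigma1 f, subst sigma2 f)) ` UNIV = fibre_product"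
proof
  show "(\<lambda>f. (subst sigma1 f, subst sigma2 f)) ` UNIV \<subseteq> fibre_product"
  proof clarify
    fix f
    have "subst sigma1 f = subst (prj TX1) (subst rho f)" "subst sigma2 f = subst (prj TX2) (subst rho f)"
      by (simp_all add: subst_comp prj_rho)
    then show "(subst sigma1 f, subst sigma2 f) \<in> fibre_product"
      unfolding fibre_product_def by (simp add: subst_prj_free_on const_term_subst_prj)
  qed
next
  show "fibre_product \<subseteq> (\<lambda>f. (subst sigma1 f, subst sigma2 f)) ` UNIV"
  proof clarify
    fix f g assume "(f, g) \<in> fibre_product"
    then have f: "f \<in> free_on TX1" and g: "g \<in> free_on TX2" and c: "const_term f = const_term g"
      by (auto simp: fibre_product_def)
    have disj: "TX1 \<inter> TX2 = {}" "TX2 \<inter> TX1 = {}" by (auto simp: TX1_def TX2_def)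
    define F where "F = f + g - scal (const_term f)"
    have F_sym: "F = g + f - scal (const_term g)" unfolding F_def c by (simp add: add.commute)
    have "subst sigma1 (subst tau F) = f"
      unfolding subst_comp sigma_tau F_def by (rule subst_prj_fibre[OF f g disj(1) c])
    moreover have "subst sigma2 (subst tau F) = g"
      unfolding subst_comp sigma_tau F_sym by (rule subst_prj_fibre[OF g f disj(2) c[symmetric]])
    ultimately have "(f, g) = (\<lambda>f. (subst sigma1 f, subst sigma2 f)) (subst tau F)"
      by simp
    then show "(f, g) \<in> range (\<lambda>f. (subst sigma1 f, subst sigma2 f))"
      by (rule image_eqI) simp
  qed
qed

theorem mainTheorem5:
  shows "two_sided_ideal (rtt_rels 1 1 1) = two_sided_ideal forty_rels
       \<and> {f. subst sigma1 f = 0 \<and> subst sigma2 f = 0} = two_sided_ideal (rtt_rels 1 1 1)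
       \<and> (\<lambda>f. (subst sigma1 f, subst sigma2 f)) ` UNIV = fibre_product"
proof -
  have "two_sided_ideal forty_rels \<subseteq> two_sided_ideal (rtt_rels 1 1 1)"
    by (rule ideal_mono[OF forty_rels_in_rtt_ideal])
  with rtt_ideal_in_kernel kernel_in_forty_ideal
  show ?thesis using image_eq_fibre_product by blast
qed

end
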